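(* The anticyclic action of $\mathfrak{S}_{n+1}$ on signed shrubs on $\{1,\dots,n\}$ preserves the number of equivalence classes of ramified vertices: if $\sigma\cdot(\varepsilon,P)=(\varepsilon',P')$ then $|\operatorname{Ram}(P)|=|\operatorname{Ram}(P')|$.
   Context: A shrub $P$ on a finite set $I$ is a set $E$ of edges (unordered pairs of distinct elements of $I$) with a height function $h_P:I\to\mathbb{N}$; $j$ covers $i$ if $\{i,j\}\in E$ and $h_P(j)=h_P(i)+1$. Axioms: (1) edges join vertices whose heights differ by $1$; (2) every vertex of positive height covers some vertex; (3) no four distinct $a,b,c,d$ with $a$ covering $b$ and $c$, $c$ covering $d$, $\{b,d\}\notin E$; (4) no five distinct $a,b,c,d,e$ with $a$ covering $c,d$, $b$ covering $d,e$, $\{a,e\}\notin E$, $\{b,c\}\notin E$. A vertex is ramified if it covers at least two distinct vertices; two ramified vertices are equivalent if they cover the same set of vertices; $\operatorname{Ram}(P)$ is the set of equivalence classes, and $r^-$ the common set of vertices covered by elements of $r\in\operatorname{Ram}(P)$. For $S\subseteq I$, $\langle S\rangle_P$ is the set of $j$ such that every descending path from $j$ to height $0$ meets $S$; with $u[S]=\sum_{k\in S}u_k$, $f_P=\prod_{i\in I}u[\langle\{i\}\rangle_P]^{-1}\prod_{r\in\operatorname{Ram}(P)}u[\langle r^-\rangle_{P\setminus\langle r\rangle_P}]/u[\langle r^-\rangle_P]$, where $P\setminus\langle r\rangle_P$ is the restriction of $P$ to $I\setminus\langle r\rangle_P$. $\mathfrak{S}_{n+1}$ acts on $\mathbb{Q}(u_1,\dots,u_n)$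 by setting $u_0=-(u_1+\dots+u_n)$, permuting $u_0,\dots,u_n$ and re-expressing in $u_1,\dots,u_n$. Signed shrubs are pairs $(\varepsilon,P)$ with $\varepsilon=\pm1$; the map $(\varepsilon,P)\mapsto\varepsilon f_P$ is injective and its image is stable under $\mathfrak{S}_{n+1}$, and the anticyclic action is defined by $\sigma\cdot(\varepsilon,P)=(\varepsilon',P')$ where $\varepsilon'f_{P'}=\sigma\cdot(\varepsilon f_P)$. *)

theory Defs
  imports Complex_Main "HOL-Combinatorics.Permutations"
begin

text \<open>A shrub on I = {1..n} is given by an edge set E (a set of 2-element subsets of I)
  and a height function h. Only the values of h on I matter.\<close>

definition covers :: "nat set set \<Rightarrow> (nat \<Rightarrow> nat) \<Rightarrow> nat \<Rightarrow> nat \<Rightarrow> bool" where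
  "covers E h j i \<longleftrightarrow> {i, j} \<in> E \<and> h j = h i + 1"

definition shrub :: "nat \<Rightarrow> nat set set \<Rightarrow> (nat \<Rightarrow> nat) \<Rightarrow> bool" where
  "shrub n E h \<longleftrightarrow>
     E \<subseteq> {{i, j} | i j. i \<in> {1..n} \<and> j \<in> {1..n} \<and> i \<noteq> j} \<and>
     (\<forall>i j. {i, j} \<in> E \<longrightarrow> h i = h j + 1 \<or> h j = h i + 1) \<and>
     (\<forall>i\<in>{1..n}. 0 < h i \<longrightarrow> (\<exists>k. covers E h i k)) \<and>
     \<not> (\<exists>a b c d. distinct [a, b, c, d] \<and> a \<in> {1..n} \<and> b \<in> {1..n} \<and> c \<in> {1..n} \<and> d \<in> {1..n}
          \<and> covers E h a b \<and> covers E h a c \<and> covers E h c d \<and> {b, d} \<notin> E) \<and>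
     \<not> (\<exists>a b c d e. distinct [a, b, c, d, e] \<and> a \<in> {1..n} \<and> b \<in> {1..n} \<and> c \<in> {1..n}
          \<and> d \<in> {1..n} \<and> e \<in> {1..n}
          \<and> covers E h a c \<and> covers E h a d \<and> covers E h b d \<and> covers E h b e
          \<and> {a, e} \<notin> E \<and> {b, c} \<notin> E)"

definition down :: "nat set set \<Rightarrow> (nat \<Rightarrow> nat) \<Rightarrow> nat \<Rightarrow> nat set" where
  "down E h j = {k. covers E h j k}"

definition ramified :: "nat \<Rightarrow> nat set set \<Rightarrow> (nat \<Rightarrow> nat) \<Rightarrow> nat \<Rightarrow> bool" where
  "ramified n E h j \<longleftrightarrow> j \<in> {1..n} \<and> 2 \<le> card (down E h j)"

definition Ram :: "nat \<Rightarrow> nat set set \<Rightarrow> (nat \<Rightarrow> nat) \<Rightarrow> nat set set" where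
  "Ram n E h = {{j. ramified n E h j \<and> down E h j = down E h i} | i. ramified n E h i}"

text \<open>r^-: the common set of vertices covered by the elements of the class r.\<close>
definition rminus :: "nat set set \<Rightarrow> (nat \<Rightarrow> nat) \<Rightarrow> nat set \<Rightarrow> nat set" where
  "rminus E h r = (\<Union>j\<in>r. down E h j)"

definition desc_path :: "nat set \<Rightarrow> nat set set \<Rightarrow> (nat \<Rightarrow> nat) \<Rightarrow> nat list \<Rightarrow> bool" where
  "desc_path J E h p \<longleftrightarrow> p \<noteq> [] \<and> set p \<subseteq> J \<and>
     (\<forall>i. Suc i < length p \<longrightarrow> covers E h (p ! i) (p ! Suc i)) \<and> h (last p) = 0"

text \<open>gen J E h S = <S> in the restriction of P to J.\<close>
definition gen :: "nat set \<Rightarrow> nat set set \<Rightarrow> (nat \<Rightarrow> nat) \<Rightarrow> nat set \<Rightarrow> nat set" where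
  "gen J E h S = {j \<in> J. \<forall>p. desc_path J E h p \<and> hd p = j \<longrightarrow> set p \<inter> S \<noteq> {}}"

definition uS :: "(nat \<Rightarrow> rat) \<Rightarrow> nat set \<Rightarrow> rat" where
  "uS u S = (\<Sum>k\<in>S. u k)"

text \<open>The rational function f_P, represented by its evaluation at a point u (coordinates u 1..u n).\<close>
definition fP :: "nat \<Rightarrow> nat set set \<Rightarrow> (nat \<Rightarrow> nat) \<Rightarrow> (nat \<Rightarrow> rat) \<Rightarrow> rat" where
  "fP n E h u =
     (\<Prod>i\<in>{1..n}. inverse (uS u (gen {1..n} E h {i}))) *
     (\<Prod>r\<in>Ram n E h.
        uS u (gen ({1..n} - gen {1..n} E h r) E h (rminus E h r))
        / uS u (gen {1..n} E h (rminus E h r)))"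

definition ext :: "nat \<Rightarrow> (nat \<Rightarrow> rat) \<Rightarrow> nat \<Rightarrow> rat" where
  "ext n u = u(0 := - (\<Sum>i=1..n. u i))"

text \<open>Every denominator
  occurring (before or after permuting u_0..u_n) is such a subsum, and this set is Zariski
  dense, so equality of rational functions is equality at all generic points.\<close>
definition generic :: "nat \<Rightarrow> (nat \<Rightarrow> rat) \<Rightarrow> bool" where
  "generic n u \<longleftrightarrow> (\<forall>S. S \<subseteq> {0..n} \<and> S \<noteq> {} \<and> S \<noteq> {0..n} \<longrightarrow> uS (ext n u) S \<noteq> 0)"

end

theory Submission
  imports Defs "HOL-Computational_Algebra.Polynomial_Factorial" "HOL-Computational_Algebra.Field_as_Ring"
begin

text \<open>Restrict both sides to a line \<open>u = a + t b\<close> in general position. Every subsum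
  \<open>u[T]\<close> of \<open>u\<^sub>0, \<dots>, u\<^sub>n\<close> becomes a linear polynomial in \<open>t\<close>, and two of them are coprime
  unless the index sets are equal or complementary. The denominator factors of \<open>f\<^sub>P\<close> are subsums
  over sets \<open>\<langle>S\<rangle>\<^sub>P\<close>, while the numerator factor of a class \<open>r\<close> is the subsum over \<open>\<langle>r\<^sup>-\<rangle>\<close>
  computed in \<open>P \<setminus> \<langle>r\<rangle>\<^sub>P\<close>; that set is never of the form \<open>\<langle>S\<rangle>\<^sub>P\<close>, since it contains every
  vertex covered by \<open>r\<close> but no element of \<open>r\<close>. Hence \<open>f\<^sub>P\<close> restricts to a reduced fraction whose
  numerator has degree \<open>|Ram(P)|\<close>. This survives permuting \<open>u\<^sub>0, \<dots>, u\<^sub>n\<close>: images of subsets of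
  \<open>{1, \<dots>, n}\<close> all miss the image of \<open>0\<close>, so they are never complementary. Proportional reduced
  fractions have numerators of equal degree.\<close>

section \<open>Descending paths and generated sets\<close>

lemma desc_path_Nil [simp]: "\<not> desc_path J E h []"
  by (simp add: desc_path_def)

lemma desc_path_Cons:
  "desc_path J E h (i # q) \<longleftrightarrow>
     i \<in> J \<and> (if q = [] then h i = 0 else covers E h i (hd q) \<and> desc_path J E h q)"
proof (cases q)
  case Nil
  then show ?thesis by (auto simp: desc_path_def)
next
  case (Cons k q')
  have "(\<forall>j. Suc j < length (i # q) \<longrightarrow> covers E h ((i # q) ! j) ((i # q) ! Suc j)) \<longleftrightarrow>
        covers E h i k \<and> (\<forall>j. Suc j < length q \<longrightarrow> covers E h (q ! j) (q ! Suc j))"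
    using Cons by (auto simp: nth_Cons split: nat.splits)
  then show ?thesis using Cons by (auto simp: desc_path_def)
qed

lemma gen_subset: "gen J E h S \<subseteq> J"
  by (auto simp: gen_def)

lemma mem_genI: "x \<in> J \<Longrightarrow> x \<in> S \<Longrightarrow> x \<in> gen J E h S"
  unfolding gen_def desc_path_def by (auto dest: hd_in_set)

lemma mem_gen_if_down_subset:
  assumes "i \<in> J" "0 < h i" "down E h i \<subseteq> gen J E h X"
  shows "i \<in> gen J E h X"
  unfolding gen_def
proof (intro CollectI conjI allI impI)
  show "i \<in> J" by fact
  fix p assume p: "desc_path J E h p \<and> hd p = i"
  then obtain q where q: "p = i # q" "covers E h i (hd q)" "desc_path J E h q"
    using assms(2) by (cases p) (auto simp: desc_path_Cons split: if_splits)
  then have "hd q \<in> gen J E h X"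
    using assms(3) by (auto simp: down_def)
  then have "set q \<inter> X \<noteq> {}"
    using q(3) unfolding gen_def by blast
  then show "set p \<inter> X \<noteq> {}"
    using q(1) by auto
qed

lemma shrub_covers_range:
  assumes "shrub n E h" "covers E h j k"
  shows "j \<in> {1..n}" "k \<in> {1..n}"
proof -
  have "{k, j} \<in> E"
    using assms(2) by (simp add: covers_def)
  then obtain a b where "{k, j} = {a, b}" "a \<in> {1..n}" "b \<in> {1..n}"
    using assms(1) unfolding shrub_def by blast
  then show "j \<in> {1..n}" "k \<in> {1..n}"
    by (auto simp: doubleton_eq_iff)
qed

lemma shrub_covers_exists: "shrub n E h \<Longrightarrow> i \<in> {1..n} \<Longrightarrow> 0 < h i \<Longrightarrow> \<exists>k. covers E h i k"
  unfolding shrub_def by blast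

lemma shrub_desc_path_exists:
  assumes S: "shrub n E h" and "k \<in> {1..n}"
  shows "\<exists>p. desc_path {1..n} E h p \<and> hd p = k \<and> (\<forall>x\<in>set p. h x \<le> h k)"
  using assms(2)
proof (induction "h k" arbitrary: k)
  case 0
  then show ?case
    by (intro exI[of _ "[k]"]) (simp add: desc_path_Cons)
next
  case (Suc m)
  obtain k' where k': "covers E h k k'"
    using shrub_covers_exists[OF S Suc.prems] Suc.hyps(2) by force
  then have "k' \<in> {1..n}" "m = h k'"
    using shrub_covers_range[OF S k'] Suc.hyps(2) by (auto simp: covers_def)
  then obtain p where p: "desc_path {1..n} E h p" "hd p = k'" "\<forall>x\<in>set p. h x \<le> h k'"
    using Suc.hyps(1) by blast
  have "p \<noteq> []"
    using p(1) by auto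
  then have "desc_path {1..n} E h (k # p)"
    using p(1,2) k' Suc.prems by (simp add: desc_path_Cons)
  moreover have "\<forall>x\<in>set (k # p). h x \<le> h k"
    using p(3) k' by (auto simp: covers_def)
  ultimately show ?case
    by (intro exI[of _ "k # p"]) simp
qed

definition ram_num :: "nat \<Rightarrow> nat set set \<Rightarrow> (nat \<Rightarrow> nat) \<Rightarrow> nat set \<Rightarrow> nat set" where
  "ram_num n E h r = gen ({1..n} - gen {1..n} E h r) E h (rminus E h r)"

definition ram_den :: "nat \<Rightarrow> nat set set \<Rightarrow> (nat \<Rightarrow> nat) \<Rightarrow> nat set \<Rightarrow> nat set" where
  "ram_den n E h r = gen {1..n} E h (rminus E h r)"

lemma fP_eq:
  "fP n E h u =
     (\<Prod>i\<in>{1..n}. inverse (uS u (gen {1..n} E h {i}))) *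
     (\<Prod>r\<in>Ram n E h. uS u (ram_num n E h r) / uS u (ram_den n E h r))"
  by (simp add: fP_def ram_num_def ram_den_def)

lemma finite_Ram: "finite (Ram n E h)"
  by (rule finite_subset[of _ "Pow {1..n}"]) (auto simp: Ram_def ramified_def)

lemma Ram_memE:
  assumes "r \<in> Ram n E h"
  obtains i where "i \<in> r" "i \<in> {1..n}" "0 < h i" "down E h i \<noteq> {}"
    "\<And>j. j \<in> r \<Longrightarrow> down E h j = down E h i" "rminus E h r = down E h i"
proof -
  obtain i where i: "ramified n E h i" "r = {j. ramified n E h j \<and> down E h j = down E h i}"
    using assms unfolding Ram_def by blast
  then have "down E h i \<noteq> {}"
    unfolding ramified_def by auto
  then have "0 < h i"
    by (auto simp: down_def covers_def)
  show thesis
    by (rule that) (use i \<open>down E h i \<noteq> {}\<close> \<open>0 < h i\<close> in \<open>auto simp: ramified_def rminus_def\<close>)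
qed

lemma down_subset_ram_num:
  assumes S: "shrub n E h" and r: "r \<in> Ram n E h" and "i \<in> r"
  shows "down E h i \<subseteq> ram_num n E h r"
proof
  fix k assume k: "k \<in> down E h i"
  have k_down: "k \<in> down E h j" if "j \<in> r" for j
    using Ram_memE[OF r] that k \<open>i \<in> r\<close> by metis
  have kI: "k \<in> {1..n}"
    using k shrub_covers_range[OF S] by (auto simp: down_def)
  obtain p where p: "desc_path {1..n} E h p" "hd p = k" "\<forall>x\<in>set p. h x \<le> h k"
    using shrub_desc_path_exists[OF S kI] by blast
  have "set p \<inter> r = {}"
    using p(3) k_down by (fastforce simp: down_def covers_def)
  then have "k \<notin> gen {1..n} E h r"
    using p(1,2) unfolding gen_def by blast
  moreover have "k \<in> rminus E h r"
    using k \<open>i \<in> r\<close> by (auto simp: rminus_def)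
  ultimately show "k \<in> ram_num n E h r"
    unfolding ram_num_def using kI by (intro mem_genI) auto
qed

lemma ram_num_ne_gen:
  assumes S: "shrub n E h" and r: "r \<in> Ram n E h"
  shows "ram_num n E h r \<noteq> gen {1..n} E h X"
proof
  assume eq: "ram_num n E h r = gen {1..n} E h X"
  obtain i where i: "i \<in> r" "i \<in> {1..n}" "0 < h i"
    using Ram_memE[OF r] by metis
  have "i \<in> gen {1..n} E h X"
    using mem_gen_if_down_subset[of i "{1..n}" h] i(2,3) down_subset_ram_num[OF S r i(1)] eq by simp
  moreover have "i \<notin> ram_num n E h r"
    using mem_genI[OF i(2,1)] gen_subset unfolding ram_num_def by blast
  ultimately show False
    using eq by simp
qed

lemma ram_num_subset: "ram_num n E h r \<subseteq> {1..n}"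
  unfolding ram_num_def by (meson Diff_subset gen_subset order_trans)

lemma ram_den_subset: "ram_den n E h r \<subseteq> {1..n}"
  unfolding ram_den_def by (rule gen_subset)

lemma ram_num_nonempty: "shrub n E h \<Longrightarrow> r \<in> Ram n E h \<Longrightarrow> ram_num n E h r \<noteq> {}"
  by (metis Ram_memE down_subset_ram_num subset_empty)

lemma ram_den_nonempty:
  assumes S: "shrub n E h" and r: "r \<in> Ram n E h"
  shows "ram_den n E h r \<noteq> {}"
proof -
  obtain i k where "k \<in> down E h i" "rminus E h r = down E h i"
    using Ram_memE[OF r] by (metis ex_in_conv)
  moreover have "k \<in> {1..n}"
    using calculation shrub_covers_range[OF S] by (auto simp: down_def)
  ultimately show ?thesis
    unfolding ram_den_def using mem_genI by blast
qed

section \<open>Subsums along a line\<close>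

definition nontrivial_subset :: "nat \<Rightarrow> nat set \<Rightarrow> bool" where
  "nontrivial_subset n T \<longleftrightarrow> T \<subseteq> {0..n} \<and> T \<noteq> {} \<and> T \<noteq> {0..n}"

lemma finite_nontrivial_subsets: "finite {T. nontrivial_subset n T}"
  by (rule finite_subset[of _ "Pow {0..n}"]) (auto simp: nontrivial_subset_def)

lemma generic_iff: "generic n u \<longleftrightarrow> (\<forall>T. nontrivial_subset n T \<longrightarrow> uS (ext n u) T \<noteq> 0)"
  by (auto simp: generic_def nontrivial_subset_def)

lemma nontrivial_subset_image:
  assumes \<tau>: "\<tau> permutes {0..n}" and "S \<subseteq> {1..n}" "S \<noteq> {}"
  shows "nontrivial_subset n (\<tau> ` S)"
proof -
  have "\<tau> ` S \<subseteq> \<tau> ` {0..n}"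
    using assms(2) by (intro image_mono) auto
  then have "\<tau> ` S \<subseteq> {0..n}"
    using permutes_image[OF \<tau>] by simp
  moreover have "card (\<tau> ` S) \<le> n"
    using card_image[OF permutes_inj_on[OF \<tau>]] card_mono[OF _ assms(2)] by simp
  ultimately show ?thesis
    using assms(3) unfolding nontrivial_subset_def by auto
qed

lemma uS_reindex: "inj_on \<tau> S \<Longrightarrow> uS (\<lambda>i. w (\<tau> i)) S = uS w (\<tau> ` S)"
  unfolding uS_def by (simp add: sum.reindex)

lemma fP_ext: "fP n E h (ext n u) = fP n E h u"
proof -
  have "uS (ext n u) (gen J E h X) = uS u (gen J E h X)" if "J \<subseteq> {1..n}" for J X
    unfolding uS_def ext_def using gen_subset that by (intro sum.cong) force+
  then show ?thesis
    by (simp add: fP_def)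
qed

definition line_subsum :: "nat \<Rightarrow> (nat \<Rightarrow> rat) \<Rightarrow> (nat \<Rightarrow> rat) \<Rightarrow> nat set \<Rightarrow> rat poly" where
  "line_subsum n a b T = [:uS (ext n a) T, uS (ext n b) T:]"

lemma poly_line_subsum: "poly (line_subsum n a b T) t = uS (ext n (\<lambda>i. a i + t * b i)) T"
proof -
  have "ext n (\<lambda>i. a i + t * b i) k = ext n a k + t * ext n b k" for k
    unfolding ext_def by (simp add: sum.distrib sum_distrib_left)
  then show ?thesis
    unfolding line_subsum_def uS_def by (simp add: sum.distrib sum_distrib_left)
qed

text \<open>Along a separating line each nontrivial subsum is a linear polynomial in \<open>t\<close>, and the
  determinant condition makes two of them coprime. Complementary subsums are negatives of each
  other, so such pairs have to be exempted.\<close>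

definition separating_line :: "nat \<Rightarrow> (nat \<Rightarrow> rat) \<Rightarrow> (nat \<Rightarrow> rat) \<Rightarrow> bool" where
  "separating_line n a b \<longleftrightarrow>
     (\<forall>T. nontrivial_subset n T \<longrightarrow> uS (ext n b) T \<noteq> 0) \<and>
     (\<forall>T1 T2. nontrivial_subset n T1 \<longrightarrow> nontrivial_subset n T2 \<longrightarrow>
        T1 \<noteq> T2 \<longrightarrow> T1 \<noteq> {0..n} - T2 \<longrightarrow>
        uS (ext n a) T1 * uS (ext n b) T2 - uS (ext n a) T2 * uS (ext n b) T1 \<noteq> 0)"

lemma coprime_linear_polys:
  fixes x1 y1 x2 y2 :: "'a::field"
  assumes "x1 * y2 - x2 * y1 \<noteq> 0"
  shows "coprime [:x1, y1:] [:x2, y2:]"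
proof (rule coprimeI)
  fix c assume "c dvd [:x1, y1:]" "c dvd [:x2, y2:]"
  then have "c dvd [:y2:] * [:x1, y1:] - [:y1:] * [:x2, y2:]"
    by (intro dvd_diff dvd_mult)
  also have "[:y2:] * [:x1, y1:] - [:y1:] * [:x2, y2:] = [:x1 * y2 - x2 * y1:]"
    by (simp add: algebra_simps)
  finally show "is_unit c"
    using assms by (metis dvd_field_iff dvd_unit_imp_unit is_unit_const_poly_iff)
qed

lemma degree_line_subsum:
  "separating_line n a b \<Longrightarrow> nontrivial_subset n T \<Longrightarrow> degree (line_subsum n a b T) = 1"
  by (simp add: separating_line_def line_subsum_def)

lemma coprime_line_subsum_image:
  assumes L: "separating_line n a b" and \<tau>: "\<tau> permutes {0..n}"
    and "S1 \<subseteq> {1..n}" "S1 \<noteq> {}" "S2 \<subseteq> {1..n}" "S2 \<noteq> {}" "S1 \<noteq> S2"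
  shows "coprime (line_subsum n a b (\<tau> ` S1)) (line_subsum n a b (\<tau> ` S2))"
proof -
  have "\<tau> ` S1 \<noteq> \<tau> ` S2"
    using assms(7) permutes_inj[OF \<tau>] by (simp add: inj_image_eq_iff)
  moreover have "\<tau> 0 \<in> {0..n} - \<tau> ` S2" "\<tau> 0 \<notin> \<tau> ` S1"
    using permutes_in_image[OF \<tau>] assms(3,5) permutes_inj[OF \<tau>] by (auto simp: inj_image_mem_iff)
  moreover have "nontrivial_subset n (\<tau> ` S1)" "nontrivial_subset n (\<tau> ` S2)"
    using nontrivial_subset_image[OF \<tau>] assms(3-6) by auto
  ultimately have "uS (ext n a) (\<tau> ` S1) * uS (ext n b) (\<tau> ` S2)
      - uS (ext n a) (\<tau> ` S2) * uS (ext n b) (\<tau> ` S1) \<noteq> 0"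
    using L unfolding separating_line_def by blast
  then show ?thesis
    unfolding line_subsum_def by (rule coprime_linear_polys)
qed

lemma infinite_generic_on_line:
  assumes L: "separating_line n a b"
  shows "infinite {t. generic n (\<lambda>i. a i + t * b i)}"
proof -
  have "{t. \<not> generic n (\<lambda>i. a i + t * b i)} \<subseteq>
        (\<Union>T\<in>{T. nontrivial_subset n T}. {- uS (ext n a) T / uS (ext n b) T})"
  proof
    fix t assume "t \<in> {t. \<not> generic n (\<lambda>i. a i + t * b i)}"
    then obtain T where T: "nontrivial_subset n T" "poly (line_subsum n a b T) t = 0"
      unfolding generic_iff poly_line_subsum by blast
    then have "t = - uS (ext n a) T / uS (ext n b) T"
      using L unfolding separating_line_def line_subsum_def by (auto simp: field_simps)
    then show "t \<in> (\<Union>T\<in>{T. nontrivial_subset n T}. {- uS (ext n a) T / uS (ext n b) T})"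
      using T(1) by blast
  qed
  moreover have "finite (\<Union>T\<in>{T. nontrivial_subset n T}. {- uS (ext n a) T / uS (ext n b) T})"
    by (intro finite_UN_I finite_nontrivial_subsets) simp
  ultimately have "finite {t. \<not> generic n (\<lambda>i. a i + t * b i)}"
    by (rule finite_subset)
  then have "infinite (UNIV - {t. \<not> generic n (\<lambda>i. a i + t * b i)})"
    by (rule Diff_infinite_finite[OF _ infinite_UNIV_char_0])
  then show ?thesis
    by (simp add: set_diff_eq)
qed

section \<open>Existence of a separating line\<close>

definition subsum_coeff :: "nat set \<Rightarrow> nat \<Rightarrow> rat" where
  "subsum_coeff T i = (if i \<in> T then 1 else 0) - (if 0 \<in> T then 1 else 0)"

lemma uS_ext_eq_sum:
  assumes "T \<subseteq> {0..n}"
  shows "uS (ext n u) T = (\<Sum>i=1..n. subsum_coeff T i * u i)"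
proof -
  have "uS (ext n u) T = (\<Sum>k\<in>{0..n}. if k \<in> T then ext n u k else 0)"
    unfolding uS_def using sum.inter_restrict[of "{0..n}" "ext n u" T] assms
    by (simp add: Int_absorb1)
  also have "{0..n} = insert 0 {1..n}"
    by auto
  also have "(\<Sum>k\<in>insert 0 {1..n}. if k \<in> T then ext n u k else 0) =
      (if 0 \<in> T then - (\<Sum>i=1..n. u i) else 0) + (\<Sum>k=1..n. if k \<in> T then u k else 0)"
    by (simp add: ext_def, intro sum.cong) (auto simp: ext_def)
  also have "\<dots> = (\<Sum>i=1..n. subsum_coeff T i * u i)"
    by (simp add: subsum_coeff_def left_diff_distrib sum_subtractf) (rule sum.cong; simp)
  finally show ?thesis .
qed

lemma sum_subsum_coeff_nonzero:
  assumes "nontrivial_subset n T"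
  shows "(\<Sum>i=1..n. subsum_coeff T i) \<noteq> 0"
proof (cases "0 \<in> T")
  case False
  obtain i where i: "i \<in> T"
    using assms unfolding nontrivial_subset_def by blast
  then have "i \<in> {1..n}"
    using assms False unfolding nontrivial_subset_def by (cases i) auto
  then have "0 < (\<Sum>i=1..n. subsum_coeff T i)"
    by (intro sum_pos2[where i=i]) (use i False in \<open>auto simp: subsum_coeff_def\<close>)
  then show ?thesis by simp
next
  case True
  obtain j where j: "j \<in> {0..n}" "j \<notin> T"
    using assms unfolding nontrivial_subset_def by blast
  then have "j \<in> {1..n}"
    using True by (cases j) auto
  then have "0 < (\<Sum>i=1..n. - subsum_coeff T i)"
    by (intro sum_pos2[where i=j]) (use j True in \<open>auto simp: subsum_coeff_def\<close>)
  then show ?thesis by (simp add: sum_negf)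
qed

lemma subset_eq_if_subsum_coeff_eq:
  assumes "T1 \<subseteq> {0..n}" "T2 \<subseteq> {0..n}" "(0 \<in> T1) = (0 \<in> T2)"
    and "\<And>j. j \<in> {1..n} \<Longrightarrow> subsum_coeff T1 j = subsum_coeff T2 j"
  shows "T1 = T2"
proof -
  have "j \<in> T1 \<longleftrightarrow> j \<in> T2" if "j \<in> {0..n}" for j
    using assms(3) assms(4)[of j] that by (cases "j = 0") (auto simp: subsum_coeff_def split: if_splits)
  then show ?thesis
    using assms(1,2) by blast
qed

lemma subset_eq_Compl_if_subsum_coeff_eq_neg:
  assumes "T1 \<subseteq> {0..n}" "T2 \<subseteq> {0..n}" "(0 \<in> T1) \<noteq> (0 \<in> T2)"
    and "\<And>j. j \<in> {1..n} \<Longrightarrow> subsum_coeff T1 j = - subsum_coeff T2 j"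
  shows "T1 = {0..n} - T2"
proof -
  have "j \<in> T1 \<longleftrightarrow> j \<notin> T2" if "j \<in> {0..n}" for j
    using assms(3) assms(4)[of j] that by (cases "j = 0") (auto simp: subsum_coeff_def split: if_splits)
  then show ?thesis
    using assms(1,2) by blast
qed

text \<open>The coefficients \<open>subsum_coeff T i\<close> all lie in \<open>{0, 1}\<close> or all in \<open>{0, -1}\<close>, so two
  proportional coefficient vectors agree up to sign.\<close>

lemma subsum_coeffs_not_proportional:
  assumes T1: "nontrivial_subset n T1" and T2: "nontrivial_subset n T2"
    and "T1 \<noteq> T2" "T1 \<noteq> {0..n} - T2"
  shows "\<exists>i\<in>{1..n}. subsum_coeff T1 i * (\<Sum>j=1..n. subsum_coeff T2 j)
                     - subsum_coeff T2 i * (\<Sum>j=1..n. subsum_coeff T1 j) \<noteq> 0"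
proof (rule ccontr)
  define \<beta>1 where "\<beta>1 = (\<Sum>j=1..n. subsum_coeff T1 j)"
  define \<beta>2 where "\<beta>2 = (\<Sum>j=1..n. subsum_coeff T2 j)"
  have \<beta>: "\<beta>1 \<noteq> 0" "\<beta>2 \<noteq> 0"
    using sum_subsum_coeff_nonzero T1 T2 unfolding \<beta>1_def \<beta>2_def by auto
  assume "\<not> ?thesis"
  then have proportional: "subsum_coeff T1 j * \<beta>2 = subsum_coeff T2 j * \<beta>1" if "j \<in> {1..n}" for j
    using that unfolding \<beta>1_def \<beta>2_def by auto
  obtain i where i: "i \<in> {1..n}" "subsum_coeff T1 i \<noteq> 0"
    using \<beta>(1) unfolding \<beta>1_def by (meson sum.neutral)
  then have "subsum_coeff T2 i \<noteq> 0"
    using proportional[OF i(1)] \<beta>(2) by auto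
  then consider "subsum_coeff T1 i = subsum_coeff T2 i" "(0 \<in> T1) = (0 \<in> T2)"
    | "subsum_coeff T1 i = - subsum_coeff T2 i" "(0 \<in> T1) \<noteq> (0 \<in> T2)"
    using i(2) by (auto simp: subsum_coeff_def split: if_splits)
  then show False
  proof cases
    case 1
    then have "\<beta>1 = \<beta>2"
      using proportional[OF i(1)] i(2) by simp
    then have "T1 = T2"
      using proportional \<beta> 1(2) T1 T2 unfolding nontrivial_subset_def
      by (intro subset_eq_if_subsum_coeff_eq) auto
    then show False
      using \<open>T1 \<noteq> T2\<close> by simp
  next
    case 2
    then have "(\<beta>2 + \<beta>1) * subsum_coeff T2 i = 0"
      using proportional[OF i(1)] by (simp add: algebra_simps)
    then have "\<beta>2 = - \<beta>1"
      using \<open>subsum_coeff T2 i \<noteq> 0\<close> by (simp add: add_eq_0_iff)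
    have "subsum_coeff T1 j = - subsum_coeff T2 j" if "j \<in> {1..n}" for j
    proof -
      have "\<beta>1 * (subsum_coeff T1 j + subsum_coeff T2 j) = 0"
        using proportional[OF that] \<open>\<beta>2 = - \<beta>1\<close> by (simp add: algebra_simps)
      then show ?thesis
        using \<beta>(1) by (simp add: add_eq_0_iff)
    qed
    then have "T1 = {0..n} - T2"
      using 2(2) T1 T2 unfolding nontrivial_subset_def
      by (intro subset_eq_Compl_if_subsum_coeff_eq_neg) auto
    then show False
      using \<open>T1 \<noteq> {0..n} - T2\<close> by simp
  qed
qed

text \<open>Take \<open>b = (1, \<dots>, 1)\<close> and \<open>a = (s, s\<^sup>2, \<dots>, s\<^sup>n)\<close>: each determinant in the definition of a
  separating line is then a nonzero polynomial in \<open>s\<close>, so all but finitely many \<open>s\<close> work.\<close>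

lemma separating_line_exists: "\<exists>a b. separating_line n a b"
proof -
  define \<beta> where "\<beta> T = (\<Sum>i=1..n. subsum_coeff T i)" for T
  define Q where "Q T1 T2 =
    (\<Sum>i=1..n. monom (subsum_coeff T1 i * \<beta> T2 - subsum_coeff T2 i * \<beta> T1) i)" for T1 T2
  define Pairs where "Pairs = {(T1, T2). nontrivial_subset n T1 \<and> nontrivial_subset n T2 \<and>
    T1 \<noteq> T2 \<and> T1 \<noteq> {0..n} - T2}"
  have "finite Pairs"
    by (rule finite_subset[of _ "Pow {0..n} \<times> Pow {0..n}"])
      (auto simp: Pairs_def nontrivial_subset_def)
  moreover have "Q T1 T2 \<noteq> 0" if "(T1, T2) \<in> Pairs" for T1 T2
  proof -
    have "nontrivial_subset n T1" "nontrivial_subset n T2" "T1 \<noteq> T2" "T1 \<noteq> {0..n} - T2"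
      using that unfolding Pairs_def by auto
    then obtain i where i: "i \<in> {1..n}"
      "subsum_coeff T1 i * \<beta> T2 - subsum_coeff T2 i * \<beta> T1 \<noteq> 0"
      using subsum_coeffs_not_proportional unfolding \<beta>_def by blast
    then have "coeff (Q T1 T2) i \<noteq> 0"
      unfolding Q_def coeff_sum coeff_monom by simp
    then show ?thesis
      by auto
  qed
  ultimately have "finite (\<Union>(T1, T2)\<in>Pairs. {s. poly (Q T1 T2) s = 0})"
    by (intro finite_UN_I) (auto intro!: poly_roots_finite)
  then obtain s where s: "s \<notin> (\<Union>(T1, T2)\<in>Pairs. {s. poly (Q T1 T2) s = 0})"
    using ex_new_if_finite[OF infinite_UNIV_char_0] by blast
  have ones: "uS (ext n (\<lambda>i. 1)) T = \<beta> T" if "T \<subseteq> {0..n}" for T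
    using uS_ext_eq_sum[OF that] unfolding \<beta>_def by simp
  have "poly (Q T1 T2) s
      = uS (ext n (\<lambda>i. s ^ i)) T1 * \<beta> T2 - uS (ext n (\<lambda>i. s ^ i)) T2 * \<beta> T1"
    if "T1 \<subseteq> {0..n}" "T2 \<subseteq> {0..n}" for T1 T2
    unfolding Q_def poly_sum poly_monom uS_ext_eq_sum[OF that(1)] uS_ext_eq_sum[OF that(2)]
    by (simp add: sum_distrib_left sum_distrib_right sum_subtractf algebra_simps)
  then have "separating_line n (\<lambda>i. s ^ i) (\<lambda>i. 1)"
    using s ones sum_subsum_coeff_nonzero
    unfolding separating_line_def Pairs_def \<beta>_def nontrivial_subset_def by auto
  then show ?thesis
    by blast
qed

lemma fP_on_line_reduced:
  assumes S: "shrub n E h" and \<tau>: "\<tau> permutes {0..n}" and L: "separating_line n a b"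
  obtains N D where "degree N = card (Ram n E h)" "coprime N D"
    "\<And>t. generic n (\<lambda>i. a i + t * b i) \<Longrightarrow> poly D t \<noteq> 0 \<and>
       fP n E h (\<lambda>i. ext n (\<lambda>i. a i + t * b i) (\<tau> i)) = poly N t / poly D t"
proof -
  let ?L = "\<lambda>X. line_subsum n a b (\<tau> ` X)"
  define N where "N = (\<Prod>r\<in>Ram n E h. ?L (ram_num n E h r))"
  define D where "D = (\<Prod>i\<in>{1..n}. ?L (gen {1..n} E h {i})) * (\<Prod>r\<in>Ram n E h. ?L (ram_den n E h r))"
  have singleton_gen: "gen {1..n} E h {i} \<subseteq> {1..n}" "gen {1..n} E h {i} \<noteq> {}" if "i \<in> {1..n}" for i
    using gen_subset mem_genI[OF that, of "{i}" E h] by auto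
  have sets: "ram_num n E h r \<subseteq> {1..n}" "ram_num n E h r \<noteq> {}"
    "ram_den n E h r \<subseteq> {1..n}" "ram_den n E h r \<noteq> {}" if "r \<in> Ram n E h" for r
    using ram_num_subset ram_den_subset ram_num_nonempty[OF S that] ram_den_nonempty[OF S that]
    by auto
  have deg: "degree (?L (ram_num n E h r)) = 1" if "r \<in> Ram n E h" for r
    using degree_line_subsum[OF L nontrivial_subset_image[OF \<tau>]] sets[OF that] by blast
  then have "\<forall>r\<in>Ram n E h. ?L (ram_num n E h r) \<noteq> 0"
    by force
  then have "degree N = (\<Sum>r\<in>Ram n E h. degree (?L (ram_num n E h r)))"
    unfolding N_def by (rule degree_prod_eq_sum_degree)
  also have "\<dots> = card (Ram n E h)"
    using deg by simp
  finally have "degree N = card (Ram n E h)" .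
  moreover have "coprime N D"
    unfolding N_def D_def
  proof (intro prod_coprime_left coprime_mult_right_iff[THEN iffD2] conjI prod_coprime_right)
    fix r assume r: "r \<in> Ram n E h"
    show "coprime (?L (ram_num n E h r)) (?L (gen {1..n} E h {i}))" if "i \<in> {1..n}" for i
      using coprime_line_subsum_image[OF L \<tau>] sets(1,2)[OF r] singleton_gen[OF that]
        ram_num_ne_gen[OF S r] by metis
    show "coprime (?L (ram_num n E h r)) (?L (ram_den n E h r'))" if "r' \<in> Ram n E h" for r'
      using coprime_line_subsum_image[OF L \<tau>] sets[OF r] sets[OF that]
        ram_num_ne_gen[OF S r] unfolding ram_den_def by metis
  qed
  moreover have "poly D t \<noteq> 0 \<and>
      fP n E h (\<lambda>i. ext n (\<lambda>i. a i + t * b i) (\<tau> i)) = poly N t / poly D t"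
    if "generic n (\<lambda>i. a i + t * b i)" for t
  proof -
    have subsum: "uS (\<lambda>i. ext n (\<lambda>i. a i + t * b i) (\<tau> i)) X = poly (?L X) t" for X
      using uS_reindex[OF permutes_inj_on[OF \<tau>]] poly_line_subsum by simp
    have nonzero: "poly (?L X) t \<noteq> 0" if "X \<subseteq> {1..n}" "X \<noteq> {}" for X
      using \<open>generic n _\<close> nontrivial_subset_image[OF \<tau> that]
      unfolding generic_iff poly_line_subsum by blast
    have "poly D t \<noteq> 0"
      unfolding D_def poly_mult poly_prod using nonzero singleton_gen sets finite_Ram by auto
    moreover have "fP n E h (\<lambda>i. ext n (\<lambda>i. a i + t * b i) (\<tau> i)) = poly N t / poly D t"
      unfolding fP_eq subsum N_def D_def poly_mult poly_prod prod_dividef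
        prod_inversef[unfolded comp_def]
      by (simp add: divide_inverse mult_ac)
    ultimately show ?thesis
      by blast
  qed
  ultimately show thesis
    using that by blast
qed

section \<open>Degrees of reduced fractions\<close>

lemma poly_eq_if_infinite_agree:
  fixes p q :: "'a::idom poly"
  assumes "infinite T" "\<And>t. t \<in> T \<Longrightarrow> poly p t = poly q t"
  shows "p = q"
proof (rule ccontr)
  assume "p \<noteq> q"
  then have "finite {t. poly (p - q) t = 0}"
    by (intro poly_roots_finite) simp
  moreover have "T \<subseteq> {t. poly (p - q) t = 0}"
    using assms(2) by auto
  ultimately show False
    using assms(1) finite_subset by blast
qed

lemma degree_eq_if_reduced_fractions_eq:
  fixes N1 D1 N2 D2 :: "'a::field_gcd poly"
  assumes "c1 \<noteq> 0" "c2 \<noteq> 0" "coprime N1 D1" "coprime N2 D2" "infinite T"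
    and "\<And>t. t \<in> T \<Longrightarrow> poly D1 t \<noteq> 0 \<and> poly D2 t \<noteq> 0 \<and>
           c1 * poly N1 t / poly D1 t = c2 * poly N2 t / poly D2 t"
  shows "degree N1 = degree N2"
proof -
  have "poly (smult c1 N1 * D2) t = poly (smult c2 N2 * D1) t" if "t \<in> T" for t
    using assms(6)[OF that] by (auto simp: field_simps)
  then have eq: "smult c1 N1 * D2 = smult c2 N2 * D1"
    using assms(5) poly_eq_if_infinite_agree by blast
  have "N1 dvd smult c2 N2 * D1"
    unfolding eq[symmetric] by (intro dvd_mult2 dvd_smult dvd_refl)
  then have "N1 dvd N2"
    using coprime_dvd_mult_left_iff[OF assms(3)] dvd_smult_iff[OF assms(2)] by blast
  have "N2 dvd smult c1 N1 * D2"
    unfolding eq by (intro dvd_mult2 dvd_smult dvd_refl)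
  then have "N2 dvd N1"
    using coprime_dvd_mult_left_iff[OF assms(4)] dvd_smult_iff[OF assms(1)] by blast
  show ?thesis
  proof (cases "N1 = 0")
    case True
    then show ?thesis
      using \<open>N1 dvd N2\<close> by simp
  next
    case False
    then show ?thesis
      using \<open>N1 dvd N2\<close> \<open>N2 dvd N1\<close> by (metis dvd_0_left dvd_imp_degree_le le_antisym)
  qed
qed

theorem mainTheorem17:
  fixes n :: nat and \<sigma> :: "nat \<Rightarrow> nat" and \<epsilon> \<epsilon>' :: rat
    and E E' :: "nat set set" and h h' :: "nat \<Rightarrow> nat"
  assumes "\<sigma> permutes {0..n}"
    and "\<epsilon> \<in> {1, -1}" and "\<epsilon>' \<in> {1, -1}"
    and "shrub n E h" and "shrub n E' h'"
    and "\<forall>u. generic n u \<longrightarrow>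
           \<epsilon>' * fP n E' h' u = \<epsilon> * fP n E h (\<lambda>i. ext n u (\<sigma> i))"
  shows "card (Ram n E h) = card (Ram n E' h')"
proof -
  obtain a b where L: "separating_line n a b"
    using separating_line_exists by blast
  obtain N' D' where N': "degree N' = card (Ram n E' h')" "coprime N' D'"
    "\<And>t. generic n (\<lambda>i. a i + t * b i) \<Longrightarrow> poly D' t \<noteq> 0 \<and>
       fP n E' h' (\<lambda>i. ext n (\<lambda>i. a i + t * b i) (id i)) = poly N' t / poly D' t"
    using fP_on_line_reduced[OF assms(5) permutes_id L] by blast
  obtain N D where N: "degree N = card (Ram n E h)" "coprime N D"
    "\<And>t. generic n (\<lambda>i. a i + t * b i) \<Longrightarrow> poly D t \<noteq> 0 \<and>
       fP n E h (\<lambda>i. ext n (\<lambda>i. a i + t * b i) (\<sigma> i)) = poly N t / poly D t"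
    using fP_on_line_reduced[OF assms(4,1) L] by blast
  have "degree N' = degree N"
  proof (rule degree_eq_if_reduced_fractions_eq[OF _ _ N'(2) N(2) infinite_generic_on_line[OF L]])
    show "\<epsilon>' \<noteq> 0" "\<epsilon> \<noteq> 0"
      using assms(2,3) by auto
    show "poly D' t \<noteq> 0 \<and> poly D t \<noteq> 0 \<and>
        \<epsilon>' * poly N' t / poly D' t = \<epsilon> * poly N t / poly D t"
      if "t \<in> {t. generic n (\<lambda>i. a i + t * b i)}" for t
    proof -
      have t: "generic n (\<lambda>i. a i + t * b i)"
        using that by simp
      then have "\<epsilon>' * fP n E' h' (\<lambda>i. a i + t * b i)
          = \<epsilon> * fP n E h (\<lambda>i. ext n (\<lambda>i. a i + t * b i) (\<sigma> i))"
        using assms(6) by blast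
      then show ?thesis
        using N'(3)[OF t] N(3)[OF t] by (simp add: fP_ext)
    qed
  qed
  then show ?thesis
    using N(1) N'(1) by simp
qed

end
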